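(* For every integer $m>1$ there exists a finite group $G$ with $s(G) > m\,\Gamma_e(G)$.
   Context: For a finite group $G$, $s(G)$ is the sum of all entries of its complex character table and $\Gamma_e(G)$ is the sum of the degrees of its irreducible complex characters. *)

theory Defs
  imports "HOL-Algebra.Group" "Jordan_Normal_Form.Matrix"
begin

definition is_rep :: "('a, 'b) monoid_scheme \<Rightarrow> nat \<Rightarrow> ('a \<Rightarrow> complex mat) \<Rightarrow> bool" where
  "is_rep G n \<rho> \<longleftrightarrow>
     (\<forall>g \<in> carrier G. \<rho> g \<in> carrier_mat n n) \<and>
     \<rho> \<one>\<^bsub>G\<^esub> = 1\<^sub>m n \<and>
     (\<forall>g \<in> carrier G. \<forall>h \<in> carrier G. \<rho> (g \<otimes>\<^bsub>G\<^esub> h) = \<rho> g * \<rho> h)"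

definition invariant_subspace :: "('a, 'b) monoid_scheme \<Rightarrow> nat \<Rightarrow> ('a \<Rightarrow> complex mat) \<Rightarrow> complex vec set \<Rightarrow> bool" where
  "invariant_subspace G n \<rho> W \<longleftrightarrow>
     W \<subseteq> carrier_vec n \<and> 0\<^sub>v n \<in> W \<and>
     (\<forall>v \<in> W. \<forall>w \<in> W. v + w \<in> W) \<and>
     (\<forall>c. \<forall>v \<in> W. c \<cdot>\<^sub>v v \<in> W) \<and>
     (\<forall>g \<in> carrier G. \<forall>v \<in> W. \<rho> g *\<^sub>v v \<in> W)"

definition irreducible_rep :: "('a, 'b) monoid_scheme \<Rightarrow> nat \<Rightarrow> ('a \<Rightarrow> complex mat) \<Rightarrow> bool" where
  "irreducible_rep G n \<rho> \<longleftrightarrow> is_rep G n \<rho> \<and> n > 0 \<and>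
     (\<forall>W. invariant_subspace G n \<rho> W \<longrightarrow> W = {0\<^sub>v n} \<or> W = carrier_vec n)"

definition mat_trace :: "complex mat \<Rightarrow> complex" where
  "mat_trace A = (\<Sum>i < dim_row A. A $$ (i, i))"

definition character :: "('a, 'b) monoid_scheme \<Rightarrow> ('a \<Rightarrow> complex mat) \<Rightarrow> 'a \<Rightarrow> complex" where
  "character G \<rho> = (\<lambda>g. if g \<in> carrier G then mat_trace (\<rho> g) else 0)"

definition irr_chars :: "('a, 'b) monoid_scheme \<Rightarrow> ('a \<Rightarrow> complex) set" where
  "irr_chars G = {character G \<rho> | n \<rho>. irreducible_rep G n \<rho>}"

definition conj_class :: "('a, 'b) monoid_scheme \<Rightarrow> 'a \<Rightarrow> 'a set" where
  "conj_class G g = {h \<otimes>\<^bsub>G\<^esub> g \<otimes>\<^bsub>G\<^esub> inv\<^bsub>G\<^esub> h | h. h \<in> carrier G}"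

definition conj_classes :: "('a, 'b) monoid_scheme \<Rightarrow> 'a set set" where
  "conj_classes G = conj_class G ` carrier G"

text \<open>s(G): sum of all entries of the character table (rows: irreducible characters,
  columns: conjugacy classes, entry = value at any representative of the class).\<close>

definition char_table_sum :: "('a, 'b) monoid_scheme \<Rightarrow> complex" where
  "char_table_sum G = (\<Sum>\<chi> \<in> irr_chars G. \<Sum>C \<in> conj_classes G. \<chi> (SOME g. g \<in> C))"

definition Gamma_e :: "('a, 'b) monoid_scheme \<Rightarrow> complex" where
  "Gamma_e G = (\<Sum>\<chi> \<in> irr_chars G. \<chi> \<one>\<^bsub>G\<^esub>)"

end

(* The Heisenberg group of order p^3, for a prime p > 2m, does the job.  Besides its p^2
   linear characters it has p - 1 irreducible characters of degree p (the Schroedinger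
   representations), and there are no others: by the orthogonality relations coming from
   Schur's lemma, a further irreducible character would be orthogonal to the regular
   character, which is the degree-weighted sum of the known ones.  The conjugacy classes are
   the p central elements and the p^2 - 1 fibres of (x, y); summing over them, the rows of
   the degree-p characters vanish and those of the linear characters add up to p^3.  Since
   Gamma_e(G) = p (2p - 1) < 2p^2, we get s(G) = p^3 > m Gamma_e(G). *)

theory Submission
  imports Defs "Jordan_Normal_Form.Determinant" "HOL-Number_Theory.Cong"
begin

lemma index_mult_mat_sum:
  assumes "A \<in> carrier_mat n m" "B \<in> carrier_mat m k" "i < n" "j < k"
  shows "(A * B) $$ (i, j) = (\<Sum>l<m. A $$ (i, l) * B $$ (l, j))"
  using assms by (auto simp: scalar_prod_def lessThan_atLeast0 intro!: sum.cong)

lemma index_mult_mat_vec_sum: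
  assumes "A \<in> carrier_mat n m" "v \<in> carrier_vec m" "i < n"
  shows "(A *\<^sub>v v) $ i = (\<Sum>l<m. A $$ (i, l) * v $ l)"
  using assms by (auto simp: scalar_prod_def lessThan_atLeast0 intro!: sum.cong)

lemma sum_delta_mult:
  fixes f :: "nat \<Rightarrow> 'a :: semiring_0"
  assumes t: "t < m"
  shows "(\<Sum>k<m. f k * (if k = t then v else 0)) = f t * v"
proof -
  have "(\<Sum>k<m. f k * (if k = t then v else 0)) = (\<Sum>k<m. if k = t then f k * v else 0)"
    by (rule sum.cong) auto
  also have "\<dots> = f t * v" using t by (subst sum.delta) auto
  finally show ?thesis .
qed

lemma mat_trace_mult_comm:
  assumes "A \<in> carrier_mat n m" "B \<in> carrier_mat m n"
  shows "mat_trace (A * B) = mat_trace (B * A)"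
proof -
  have "mat_trace (A * B) = (\<Sum>i<n. \<Sum>l<m. A $$ (i, l) * B $$ (l, i))"
    unfolding mat_trace_def using assms
    by (auto intro!: sum.cong simp del: index_mult_mat(1) simp: index_mult_mat_sum[OF assms])
  also have "\<dots> = (\<Sum>l<m. \<Sum>i<n. B $$ (l, i) * A $$ (i, l))"
    by (subst sum.swap) (simp add: mult.commute)
  also have "\<dots> = mat_trace (B * A)"
    unfolding mat_trace_def using assms
    by (auto intro!: sum.cong simp del: index_mult_mat(1) simp: index_mult_mat_sum[OF assms(2,1)])
  finally show ?thesis .
qed

lemma nonzero_vec_nonzero_index:
  assumes "v \<in> carrier_vec n" "v \<noteq> 0\<^sub>v n"
  shows "\<exists>j<n. v $ j \<noteq> 0"
proof (rule ccontr)
  assume "\<not> ?thesis"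
  then have "v = 0\<^sub>v n" using assms(1) by (intro eq_vecI) auto
  with assms(2) show False ..
qed

lemma nonzero_mat_nonzero_column:
  fixes T :: "'a :: semiring_1 mat"
  assumes T: "T \<in> carrier_mat n m" and "T \<noteq> 0\<^sub>m n m"
  shows "\<exists>l<m. T *\<^sub>v unit_vec m l \<noteq> 0\<^sub>v n"
proof (rule ccontr)
  assume zero_cols: "\<not> ?thesis"
  have "T $$ (i, l) = 0" if "i < n" "l < m" for i l
  proof -
    have "T $$ (i, l) = (T *\<^sub>v unit_vec m l) $ i" using that T by (simp add: carrier_matD)
    then show ?thesis using zero_cols that by simp
  qed
  then have "T = 0\<^sub>m n m"
    using T by (intro eq_matI) auto
  with assms(2) show False ..
qed

lemma mat_kernel_nontrivial_if_wide:
  fixes A :: "'a :: idom mat"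
  assumes A: "A \<in> carrier_mat n m" and nm: "n < m"
  shows "\<exists>v \<in> carrier_vec m. v \<noteq> 0\<^sub>v m \<and> A *\<^sub>v v = 0\<^sub>v n"
proof -
  \<comment> \<open>pad A with zero rows to a singular square matrix\<close>
  define A' where "A' = mat m m (\<lambda>(i, j). if i < n then A $$ (i, j) else 0)"
  have A': "A' \<in> carrier_mat m m" unfolding A'_def by auto
  have "(\<Prod>i = 0..<m. A' $$ (i, p i)) = 0" if "p permutes {0..<m}" for p
    using that nm by (intro prod_zero bexI[of _ "m - 1"]) (auto simp: A'_def permutes_in_image)
  then have "det A' = 0"
    unfolding det_def using A' by (auto intro!: sum.neutral)
  then obtain v where v: "v \<in> carrier_vec m" "v \<noteq> 0\<^sub>v m" "A' *\<^sub>v v = 0\<^sub>v m"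
    using det_0_iff_vec_prod_zero[OF A'] by auto
  have "(A *\<^sub>v v) $ i = (A' *\<^sub>v v) $ i" if "i < n" for i
  proof -
    have "(A' *\<^sub>v v) $ i = (\<Sum>l<m. A' $$ (i, l) * v $ l)"
      using that nm by (intro index_mult_mat_vec_sum[OF A' v(1)]) simp
    also have "\<dots> = (A *\<^sub>v v) $ i"
      using that nm by (simp add: index_mult_mat_vec_sum[OF A v(1)] A'_def)
    finally show ?thesis by simp
  qed
  then have "A *\<^sub>v v = 0\<^sub>v n"
    using v(3) A nm by (intro eq_vecI) auto
  with v show ?thesis by auto
qed

lemma dim_le_if_mat_vec_inj:
  fixes A :: "'a :: idom mat"
  assumes "A \<in> carrier_mat n m"
    and "\<And>v. v \<in> carrier_vec m \<Longrightarrow> A *\<^sub>v v = 0\<^sub>v n \<Longrightarrow> v = 0\<^sub>v m"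
  shows "m \<le> n"
  using mat_kernel_nontrivial_if_wide[OF assms(1)] assms(2) by force

lemma dim_le_if_mat_vec_surj:
  fixes A :: "'a :: idom mat"
  assumes A: "A \<in> carrier_mat n m" and surj: "carrier_vec n \<subseteq> (*\<^sub>v) A ` carrier_vec m"
  shows "n \<le> m"
proof (rule ccontr)
  assume "\<not> n \<le> m"
  then obtain y where y: "y \<in> carrier_vec n" "y \<noteq> 0\<^sub>v n" and Ty: "transpose_mat A *\<^sub>v y = 0\<^sub>v m"
    using mat_kernel_nontrivial_if_wide[of "transpose_mat A" m n] A by auto
  have "y $ j = 0" if j: "j < n" for j
  proof -
    obtain u where u: "u \<in> carrier_vec m" "unit_vec n j = A *\<^sub>v u"
      using surj j unit_vec_carrier by blast
    have "y $ j = y \<bullet> (A *\<^sub>v u)" using j u(2)[symmetric] by simp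
    also have "\<dots> = (transpose_mat A *\<^sub>v y) \<bullet> u" using transpose_vec_mult_scalar[OF A u(1) y(1)] by simp
    finally show ?thesis using Ty u(1) by simp
  qed
  then show False using nonzero_vec_nonzero_index[OF y] by blast
qed

section \<open>Representations and characters\<close>

definition intertwiner ::
  "('a, 'b) monoid_scheme \<Rightarrow> ('a \<Rightarrow> complex mat) \<Rightarrow> ('a \<Rightarrow> complex mat) \<Rightarrow> complex mat \<Rightarrow> bool" where
  "intertwiner G \<rho> \<sigma> T \<longleftrightarrow> (\<forall>g \<in> carrier G. \<rho> g * T = T * \<sigma> g)"

lemma is_rep_carrier: "is_rep G n \<rho> \<Longrightarrow> g \<in> carrier G \<Longrightarrow> \<rho> g \<in> carrier_mat n n"
  unfolding is_rep_def by blast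

lemma is_rep_mult:
  "is_rep G n \<rho> \<Longrightarrow> g \<in> carrier G \<Longrightarrow> h \<in> carrier G \<Longrightarrow> \<rho> (g \<otimes>\<^bsub>G\<^esub> h) = \<rho> g * \<rho> h"
  unfolding is_rep_def by blast

lemma irreducible_rep_is_rep: "irreducible_rep G n \<rho> \<Longrightarrow> is_rep G n \<rho>"
  unfolding irreducible_rep_def by blast

lemma irreducible_repD:
  "irreducible_rep G n \<rho> \<Longrightarrow> invariant_subspace G n \<rho> W \<Longrightarrow> W = {0\<^sub>v n} \<or> W = carrier_vec n"
  unfolding irreducible_rep_def by blast

lemma character_one:
  assumes "monoid G" "is_rep G n \<rho>"
  shows "character G \<rho> \<one>\<^bsub>G\<^esub> = of_nat n"
  using assms unfolding character_def is_rep_def mat_trace_def by (simp add: monoid.one_closed)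

lemma conj_class_conv:
  fixes G (structure)
  assumes "group G" "g \<in> carrier G"
  shows "conj_class G g = {k \<in> carrier G. \<exists>h\<in>carrier G. k \<otimes> h = h \<otimes> g}"
proof -
  interpret group G by (rule assms(1))
  have conj_iff: "k = h \<otimes> g \<otimes> inv h \<longleftrightarrow> k \<otimes> h = h \<otimes> g"
    if "k \<in> carrier G" "h \<in> carrier G" for k h
    using that assms(2) by (metis inv_closed m_closed inv_solve_right)
  show ?thesis
    unfolding conj_class_def
  proof (intro equalityI subsetI)
    fix k assume "k \<in> {h \<otimes> g \<otimes> inv h |h. h \<in> carrier G}"
    then obtain h where h: "h \<in> carrier G" "k = h \<otimes> g \<otimes> inv h" by blast
    then have "k \<in> carrier G" using assms(2) by simp
    with h conj_iff[of k h] show "k \<in> {k \<in> carrier G. \<exists>h\<in>carrier G. k \<otimes> h = h \<otimes> g}"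
      by blast
  next
    fix k assume "k \<in> {k \<in> carrier G. \<exists>h\<in>carrier G. k \<otimes> h = h \<otimes> g}"
    then obtain h where "k \<in> carrier G" "h \<in> carrier G" "k \<otimes> h = h \<otimes> g" by blast
    with conj_iff[of k h] show "k \<in> {h \<otimes> g \<otimes> inv h |h. h \<in> carrier G}"
      by blast
  qed
qed

lemma invariant_subspace_sum_closed:
  fixes m :: nat
  assumes W: "invariant_subspace G n \<rho> W" and f: "\<And>y. y < m \<Longrightarrow> f y \<in> W"
  shows "vec n (\<lambda>i. \<Sum>y<m. f y $ i) \<in> W"
  using f
proof (induction m)
  case 0
  have "vec n (\<lambda>i. \<Sum>y<0. f y $ i) = 0\<^sub>v n" by (intro eq_vecI) auto
  then show ?case using W unfolding invariant_subspace_def by simp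
next
  case (Suc m)
  have "f m \<in> carrier_vec n" using Suc.prems W unfolding invariant_subspace_def by auto
  then have "vec n (\<lambda>i. \<Sum>y<Suc m. f y $ i) = vec n (\<lambda>i. \<Sum>y<m. f y $ i) + f m"
    by (intro eq_vecI) auto
  then show ?case using Suc W unfolding invariant_subspace_def by simp
qed

lemma invariant_subspace_full_if_unit_vecs:
  assumes W: "invariant_subspace G n \<rho> W" and units: "\<And>i. i < n \<Longrightarrow> unit_vec n i \<in> W"
  shows "W = carrier_vec n"
proof
  show "W \<subseteq> carrier_vec n" using W unfolding invariant_subspace_def by blast
  show "carrier_vec n \<subseteq> W"
  proof
    fix u :: "complex vec" assume u: "u \<in> carrier_vec n"
    have "vec n (\<lambda>r. \<Sum>i<n. (u $ i \<cdot>\<^sub>v unit_vec n i) $ r) \<in> W"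
      using W units unfolding invariant_subspace_def by (intro invariant_subspace_sum_closed[OF W]) auto
    moreover have "vec n (\<lambda>r. \<Sum>i<n. (u $ i \<cdot>\<^sub>v unit_vec n i) $ r) = u"
      using u by (intro eq_vecI) (auto simp: if_distrib[of "\<lambda>x. _ * x"] cong: if_cong)
    ultimately show "u \<in> W" by simp
  qed
qed

lemma irreducible_rep_dim1:
  assumes "is_rep G 1 \<rho>"
  shows "irreducible_rep G 1 \<rho>"
  unfolding irreducible_rep_def
proof (intro conjI allI impI assms)
  fix W assume W: "invariant_subspace G 1 \<rho> W"
  show "W = {0\<^sub>v 1} \<or> W = carrier_vec 1"
  proof (cases "W \<subseteq> {0\<^sub>v 1}")
    case True
    then show ?thesis using W unfolding invariant_subspace_def by blast
  next
    case False
    then obtain v where v: "v \<in> W" "v \<noteq> 0\<^sub>v 1" by blast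
    then have "v \<in> carrier_vec 1" using W unfolding invariant_subspace_def by blast
    then have "unit_vec 1 0 = (1 / v $ 0) \<cdot>\<^sub>v v"
      using nonzero_vec_nonzero_index[OF _ v(2)] by (intro eq_vecI) auto
    then have "unit_vec 1 0 \<in> W" using v(1) W unfolding invariant_subspace_def by metis
    then show ?thesis using invariant_subspace_full_if_unit_vecs[OF W] by auto
  qed
qed simp

lemma intertwiner_kernel_invariant:
  assumes \<rho>: "is_rep G n \<rho>" and \<sigma>: "is_rep G n' \<sigma>" and T: "T \<in> carrier_mat n n'"
    and int: "intertwiner G \<rho> \<sigma> T"
  shows "invariant_subspace G n' \<sigma> {v \<in> carrier_vec n'. T *\<^sub>v v = 0\<^sub>v n}"
    (is "invariant_subspace _ _ _ ?K")
  unfolding invariant_subspace_def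
proof (intro conjI ballI allI)
  fix g v assume g: "g \<in> carrier G" and v: "v \<in> ?K"
  have "T *\<^sub>v (\<sigma> g *\<^sub>v v) = (\<rho> g * T) *\<^sub>v v"
    using int g T v is_rep_carrier[OF \<sigma> g] unfolding intertwiner_def by auto
  also have "\<dots> = 0\<^sub>v n"
    using T v is_rep_carrier[OF \<rho> g] by auto
  finally show "\<sigma> g *\<^sub>v v \<in> ?K"
    using v is_rep_carrier[OF \<sigma> g] by auto
next
  fix v w assume "v \<in> ?K" "w \<in> ?K"
  then show "v + w \<in> ?K"
    using mult_add_distrib_mat_vec[OF T] by simp
next
  fix c :: complex and v assume v: "v \<in> ?K"
  then have "T *\<^sub>v (c \<cdot>\<^sub>v v) = 0\<^sub>v n"
    using mult_mat_vec[OF T] by (auto intro!: eq_vecI)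
  then show "c \<cdot>\<^sub>v v \<in> ?K"
    using v by simp
qed (use T in auto)

lemma intertwiner_image_invariant:
  assumes \<rho>: "is_rep G n \<rho>" and \<sigma>: "is_rep G n' \<sigma>" and T: "T \<in> carrier_mat n n'"
    and int: "intertwiner G \<rho> \<sigma> T"
  shows "invariant_subspace G n \<rho> ((*\<^sub>v) T ` carrier_vec n')"
  unfolding invariant_subspace_def
proof (intro conjI ballI allI)
  show "0\<^sub>v n \<in> (*\<^sub>v) T ` carrier_vec n'"
    using T by (intro image_eqI[of _ _ "0\<^sub>v n'"]) auto
  fix v assume "v \<in> (*\<^sub>v) T ` carrier_vec n'"
  then obtain v' where v': "v' \<in> carrier_vec n'" and v: "v = T *\<^sub>v v'" by blast
  show "c \<cdot>\<^sub>v v \<in> (*\<^sub>v) T ` carrier_vec n'" for c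
    using T v v' by (intro image_eqI[of _ _ "c \<cdot>\<^sub>v v'"]) (auto simp: mult_mat_vec)
  show "v + w \<in> (*\<^sub>v) T ` carrier_vec n'" if w_image: "w \<in> (*\<^sub>v) T ` carrier_vec n'" for w
  proof -
    obtain w' where w': "w' \<in> carrier_vec n'" and w: "w = T *\<^sub>v w'" using w_image by blast
    show ?thesis
      using T v v' w w' by (intro image_eqI[of _ _ "v' + w'"]) (auto simp: mult_add_distrib_mat_vec)
  qed
  show "\<rho> g *\<^sub>v v \<in> (*\<^sub>v) T ` carrier_vec n'" if g: "g \<in> carrier G" for g
  proof -
    have "\<rho> g *\<^sub>v v = (\<rho> g * T) *\<^sub>v v'"
      using T v v' is_rep_carrier[OF \<rho> g] by auto
    also have "\<dots> = (T * \<sigma> g) *\<^sub>v v'"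
      using int g unfolding intertwiner_def by simp
    also have "\<dots> = T *\<^sub>v (\<sigma> g *\<^sub>v v')"
      using T v' is_rep_carrier[OF \<sigma> g] by auto
    finally have "\<rho> g *\<^sub>v v = T *\<^sub>v (\<sigma> g *\<^sub>v v')" .
    then show ?thesis using v' is_rep_carrier[OF \<sigma> g] by auto
  qed
qed (use T in auto)

lemma irreducible_intertwiner_invertible:
  assumes \<rho>: "irreducible_rep G n \<rho>" and \<sigma>: "irreducible_rep G n' \<sigma>"
    and T: "T \<in> carrier_mat n n'" and int: "intertwiner G \<rho> \<sigma> T" and nz: "T \<noteq> 0\<^sub>m n n'"
  shows "n' = n" and "det T \<noteq> 0"
proof -
  note reps = irreducible_rep_is_rep[OF \<rho>] irreducible_rep_is_rep[OF \<sigma>]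
  obtain l where l: "l < n'" and Tl: "T *\<^sub>v unit_vec n' l \<noteq> 0\<^sub>v n"
    using nonzero_mat_nonzero_column[OF T nz] by blast
  have "unit_vec n' l \<notin> {v \<in> carrier_vec n'. T *\<^sub>v v = 0\<^sub>v n}" using Tl by blast
  then have "{v \<in> carrier_vec n'. T *\<^sub>v v = 0\<^sub>v n} = {0\<^sub>v n'}"
    using irreducible_repD[OF \<sigma> intertwiner_kernel_invariant[OF reps T int]] unit_vec_carrier
    by blast
  then have inj: "v = 0\<^sub>v n'" if "v \<in> carrier_vec n'" "T *\<^sub>v v = 0\<^sub>v n" for v
    using that by blast
  have "T *\<^sub>v unit_vec n' l \<in> (*\<^sub>v) T ` carrier_vec n'" by simp
  then have "(*\<^sub>v) T ` carrier_vec n' = carrier_vec n"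
    using irreducible_repD[OF \<rho> intertwiner_image_invariant[OF reps T int]] Tl by blast
  then have "n \<le> n'" by (intro dim_le_if_mat_vec_surj[OF T]) simp
  moreover have "n' \<le> n" by (rule dim_le_if_mat_vec_inj[OF T inj])
  ultimately show n: "n' = n" by simp
  show "det T \<noteq> 0"
    using det_0_iff_vec_prod_zero[of T n] T inj unfolding n by blast
qed

lemma character_eq_if_invertible_intertwiner:
  assumes \<rho>: "is_rep G n \<rho>" and \<sigma>: "is_rep G n \<sigma>"
    and T: "T \<in> carrier_mat n n" "det T \<noteq> 0" and int: "intertwiner G \<rho> \<sigma> T"
  shows "character G \<rho> = character G \<sigma>"
proof
  obtain S where S: "S \<in> carrier_mat n n" "S * T = 1\<^sub>m n" "T * S = 1\<^sub>m n"
    using det_non_zero_imp_unit[OF T, of "()"] unfolding Units_def ring_mat_def by auto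
  fix g show "character G \<rho> g = character G \<sigma> g"
  proof (cases "g \<in> carrier G")
    case True
    note \<rho>g = is_rep_carrier[OF \<rho> True] and \<sigma>g = is_rep_carrier[OF \<sigma> True]
    have "\<sigma> g = (S * T) * \<sigma> g" using S \<sigma>g by simp
    also have "\<dots> = S * (T * \<sigma> g)" using S(1) T(1) \<sigma>g by (rule assoc_mult_mat)
    also have "\<dots> = S * (\<rho> g * T)" using int True unfolding intertwiner_def by simp
    finally have "mat_trace (\<sigma> g) = mat_trace (S * (\<rho> g * T))" by simp
    also have "\<dots> = mat_trace ((\<rho> g * T) * S)"
      using S T \<rho>g by (intro mat_trace_mult_comm) auto
    also have "\<dots> = mat_trace (\<rho> g)"
      using S T \<rho>g by (simp add: assoc_mult_mat[of _ n n _ n _ n])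
    finally show ?thesis unfolding character_def using True by simp
  qed (simp add: character_def)
qed

lemma irreducible_character_eq_if_intertwiner:
  assumes "irreducible_rep G n \<rho>" "irreducible_rep G n' \<sigma>"
    and "T \<in> carrier_mat n n'" "intertwiner G \<rho> \<sigma> T" "T \<noteq> 0\<^sub>m n n'"
  shows "character G \<rho> = character G \<sigma>"
proof -
  have n: "n' = n" and "det T \<noteq> 0" by (fact irreducible_intertwiner_invertible[OF assms])+
  with assms show ?thesis
    by (intro character_eq_if_invertible_intertwiner[of G n]) (auto intro: irreducible_rep_is_rep)
qed

lemma coefficient_average_intertwiner:
  fixes G (structure)
  assumes G: "group G" and \<rho>: "is_rep G n \<rho>" and \<sigma>: "is_rep G n' \<sigma>" and jk: "j < n" "k < n'"
  shows "intertwiner G \<rho> \<sigma>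
           (mat n n' (\<lambda>(i, l). \<Sum>g\<in>carrier G. \<rho> g $$ (i, j) * \<sigma> (inv\<^bsub>G\<^esub> g) $$ (k, l)))"
    (is "intertwiner G \<rho> \<sigma> ?T")
  unfolding intertwiner_def
proof
  interpret group G by (rule G)
  have T: "?T \<in> carrier_mat n n'" by simp
  fix h assume h: "h \<in> carrier G"
  note \<rho>c = is_rep_carrier[OF \<rho>] and \<sigma>c = is_rep_carrier[OF \<sigma>]
  show "\<rho> h * ?T = ?T * \<sigma> h"
  proof (rule eq_matI)
    fix a b assume "a < dim_row (?T * \<sigma> h)" "b < dim_col (?T * \<sigma> h)"
    then have ab: "a < n" "b < n'" using \<sigma>c[OF h] by auto
    have "(\<rho> h * ?T) $$ (a, b)
        = (\<Sum>m<n. \<rho> h $$ (a, m) * (\<Sum>g\<in>carrier G. \<rho> g $$ (m, j) * \<sigma> (inv g) $$ (k, b)))"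
      using ab by (simp add: index_mult_mat_sum[OF \<rho>c[OF h] T ab] del: index_mult_mat(1))
    also have "\<dots> = (\<Sum>g\<in>carrier G. (\<Sum>m<n. \<rho> h $$ (a, m) * \<rho> g $$ (m, j)) * \<sigma> (inv g) $$ (k, b))"
      by (simp add: sum_distrib_left sum_distrib_right mult_ac) (rule sum.swap)
    also have "\<dots> = (\<Sum>g\<in>carrier G. \<rho> (h \<otimes> g) $$ (a, j) * \<sigma> (inv g) $$ (k, b))"
      using h ab jk
      by (intro sum.cong) (simp_all add: is_rep_mult[OF \<rho>] index_mult_mat_sum[OF \<rho>c \<rho>c] del: index_mult_mat(1))
    also have "\<dots> = (\<Sum>g\<in>carrier G. \<rho> g $$ (a, j) * \<sigma> (inv g \<otimes> h) $$ (k, b))"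
      by (rule sum.reindex_bij_witness[of _ "\<lambda>g. inv h \<otimes> g" "\<lambda>g. h \<otimes> g"])
         (use h in \<open>auto simp: m_assoc[symmetric] inv_mult_group m_assoc[of _ "inv h" h]\<close>)
    also have "\<dots> = (\<Sum>g\<in>carrier G. \<rho> g $$ (a, j) * (\<Sum>m<n'. \<sigma> (inv g) $$ (k, m) * \<sigma> h $$ (m, b)))"
      using h ab jk
      by (intro sum.cong) (simp_all add: is_rep_mult[OF \<sigma>] index_mult_mat_sum[OF \<sigma>c \<sigma>c] del: index_mult_mat(1))
    also have "\<dots> = (\<Sum>m<n'. (\<Sum>g\<in>carrier G. \<rho> g $$ (a, j) * \<sigma> (inv g) $$ (k, m)) * \<sigma> h $$ (m, b))"
      by (simp add: sum_distrib_left sum_distrib_right mult_ac) (rule sum.swap)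
    also have "\<dots> = (?T * \<sigma> h) $$ (a, b)"
      using ab by (simp add: index_mult_mat_sum[OF T \<sigma>c[OF h] ab] del: index_mult_mat(1))
    finally show "(\<rho> h * ?T) $$ (a, b) = (?T * \<sigma> h) $$ (a, b)" .
  qed (use \<rho>c[OF h] \<sigma>c[OF h] in auto)
qed

lemma irreducible_coefficients_orthogonal:
  fixes G (structure)
  assumes G: "group G" and \<rho>: "irreducible_rep G n \<rho>" and \<sigma>: "irreducible_rep G n' \<sigma>"
    and ne: "character G \<rho> \<noteq> character G \<sigma>"
    and ij: "i < n" "j < n" and kl: "k < n'" "l < n'"
  shows "(\<Sum>g\<in>carrier G. \<rho> g $$ (i, j) * \<sigma> (inv\<^bsub>G\<^esub> g) $$ (k, l)) = 0"
proof -
  let ?T = "mat n n' (\<lambda>(i, l). \<Sum>g\<in>carrier G. \<rho> g $$ (i, j) * \<sigma> (inv\<^bsub>G\<^esub> g) $$ (k, l))"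
  have "intertwiner G \<rho> \<sigma> ?T"
    using G \<rho> \<sigma> ij kl by (intro coefficient_average_intertwiner irreducible_rep_is_rep)
  then have "?T = 0\<^sub>m n n'"
    using irreducible_character_eq_if_intertwiner[OF \<rho> \<sigma>] ne by fastforce
  then have "?T $$ (i, l) = 0\<^sub>m n n' $$ (i, l)" by simp
  with ij kl show ?thesis by simp
qed

lemma character_orthogonality:
  fixes G (structure)
  assumes G: "group G" and \<rho>: "irreducible_rep G n \<rho>" and \<sigma>: "irreducible_rep G n' \<sigma>"
    and ne: "character G \<rho> \<noteq> character G \<sigma>"
  shows "(\<Sum>g\<in>carrier G. character G \<rho> g * character G \<sigma> (inv\<^bsub>G\<^esub> g)) = 0"
proof -
  interpret group G by (rule G)
  note \<rho>c = is_rep_carrier[OF irreducible_rep_is_rep[OF \<rho>]]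
    and \<sigma>c = is_rep_carrier[OF irreducible_rep_is_rep[OF \<sigma>]]
  have "(\<Sum>g\<in>carrier G. character G \<rho> g * character G \<sigma> (inv g))
      = (\<Sum>g\<in>carrier G. (\<Sum>i<n. \<rho> g $$ (i, i)) * (\<Sum>k<n'. \<sigma> (inv g) $$ (k, k)))"
  proof (rule sum.cong)
    fix g assume g: "g \<in> carrier G"
    show "character G \<rho> g * character G \<sigma> (inv g)
        = (\<Sum>i<n. \<rho> g $$ (i, i)) * (\<Sum>k<n'. \<sigma> (inv g) $$ (k, k))"
      using \<rho>c[OF g] \<sigma>c[OF inv_closed[OF g]] g by (simp add: character_def mat_trace_def carrier_matD)
  qed simp
  also have "\<dots> = (\<Sum>i<n. \<Sum>k<n'. \<Sum>g\<in>carrier G. \<rho> g $$ (i, i) * \<sigma> (inv g) $$ (k, k))"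
    by (simp add: sum_product) (subst sum.swap, simp add: sum.swap[of _ "carrier G"])
  also have "\<dots> = 0"
    using irreducible_coefficients_orthogonal[OF G \<rho> \<sigma> ne] by simp
  finally show ?thesis .
qed

text \<open>An irreducible character outside L would be orthogonal to every member of L, hence to
  the regular character; but its inner product with the regular character is its degree.\<close>

lemma irr_chars_subset_if_regular_character:
  fixes G (structure)
  assumes G: "group G" "finite (carrier G)" and L: "finite L" "L \<subseteq> irr_chars G"
    and regular: "\<And>h. h \<in> carrier G \<Longrightarrow>
      (\<Sum>\<psi>\<in>L. \<psi> \<one>\<^bsub>G\<^esub> * \<psi> h) = (if h = \<one>\<^bsub>G\<^esub> then of_nat (card (carrier G)) else 0)"
  shows "irr_chars G \<subseteq> L"
proof
  interpret group G by (rule G(1))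
  fix \<chi> assume "\<chi> \<in> irr_chars G"
  then obtain n \<rho> where \<rho>: "irreducible_rep G n \<rho>" and \<chi>: "\<chi> = character G \<rho>"
    unfolding irr_chars_def by auto
  show "\<chi> \<in> L"
  proof (rule ccontr)
    assume "\<chi> \<notin> L"
    have orth: "(\<Sum>g\<in>carrier G. \<chi> g * \<psi> (inv g)) = 0" if "\<psi> \<in> L" for \<psi>
    proof -
      obtain n' \<sigma> where \<sigma>: "irreducible_rep G n' \<sigma>" and \<psi>: "\<psi> = character G \<sigma>"
        using \<open>\<psi> \<in> L\<close> L(2) unfolding irr_chars_def by auto
      have "character G \<rho> \<noteq> character G \<sigma>"
        using \<open>\<chi> \<notin> L\<close> \<open>\<psi> \<in> L\<close> \<chi> \<psi> by auto
      then show ?thesis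
        using character_orthogonality[OF G(1) \<rho> \<sigma>] \<chi> \<psi> by simp
    qed
    have "0 = (\<Sum>\<psi>\<in>L. \<psi> \<one> * (\<Sum>g\<in>carrier G. \<chi> g * \<psi> (inv g)))"
      using orth by simp
    also have "\<dots> = (\<Sum>g\<in>carrier G. \<chi> g * (\<Sum>\<psi>\<in>L. \<psi> \<one> * \<psi> (inv g)))"
      by (simp add: sum_distrib_left sum_distrib_right mult_ac) (rule sum.swap)
    also have "\<dots> = (\<Sum>g\<in>carrier G. \<chi> g * (if g = \<one> then of_nat (card (carrier G)) else 0))"
      by (intro sum.cong) (auto simp: regular)
    also have "\<dots> = of_nat n * of_nat (card (carrier G))"
      using G(2) character_one[OF monoid_axioms irreducible_rep_is_rep[OF \<rho>]]
      by (simp add: \<chi> if_distrib sum.delta cong: if_cong)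
    finally show False
      using \<rho> G(2) one_closed unfolding irreducible_rep_def by (auto simp: card_gt_0_iff)
  qed
qed

definition unity_root :: "nat \<Rightarrow> complex" where
  "unity_root n = cis (2 * pi / n)"

lemma unity_root_pow: "unity_root n ^ k = cis (2 * pi * real k / real n)"
  unfolding unity_root_def DeMoivre by (simp add: field_simps)

lemma unity_root_pow_mod:
  assumes "n > 0"
  shows "unity_root n ^ k = unity_root n ^ (k mod n)"
proof -
  have "unity_root n ^ n = 1" using assms by (simp add: unity_root_pow)
  then have "unity_root n ^ (n * (k div n) + k mod n) = unity_root n ^ (k mod n)"
    by (simp only: power_add power_mult) simp
  then show ?thesis by simp
qed

lemma unity_root_pow_eq_iff:
  assumes "n > 0"
  shows "unity_root n ^ j = unity_root n ^ k \<longleftrightarrow> j mod n = k mod n"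
proof -
  have "inj_on (\<lambda>k. cis (2 * pi * real k / real n)) {..<n}"
    using bij_betw_roots_unity[OF assms] by (simp add: bij_betw_def)
  then have "unity_root n ^ (j mod n) = unity_root n ^ (k mod n) \<longleftrightarrow> j mod n = k mod n"
    using assms unfolding unity_root_pow by (auto dest: inj_onD)
  then show ?thesis
    using unity_root_pow_mod[OF assms, of j] unity_root_pow_mod[OF assms, of k] by simp
qed

lemma unity_root_pow_eq_1_iff: "n > 0 \<Longrightarrow> unity_root n ^ k = 1 \<longleftrightarrow> n dvd k"
  using unity_root_pow_eq_iff[of n k 0] by (simp add: dvd_eq_mod_eq_0)

lemma sum_unity_root_pow:
  assumes "n > 0"
  shows "(\<Sum>y<n. unity_root n ^ (k * y)) = (if n dvd k then of_nat n else 0)"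
proof (cases "n dvd k")
  case True
  then have "unity_root n ^ k = 1" using assms by (simp add: unity_root_pow_eq_1_iff)
  then show ?thesis using True by (simp add: power_mult)
next
  case False
  let ?q = "unity_root n ^ k"
  have "?q \<noteq> 1" using False assms by (simp add: unity_root_pow_eq_1_iff)
  then have "(\<Sum>y<n. ?q ^ y) = (?q ^ n - 1) / (?q - 1)" by (rule geometric_sum)
  also have "?q ^ n = 1"
    using assms by (simp add: power_mult[symmetric] unity_root_pow_eq_1_iff)
  finally show ?thesis using False by (simp add: power_mult)
qed

lemma mod_add_right_cancel_less:
  fixes a b c m :: nat
  assumes "a < m" "b < m" "(a + c) mod m = (b + c) mod m"
  shows "a = b"
  using assms cong_add_rcancel_nat[of a c b m] cong_less_modulus_unique_nat[of a b m]
  by (simp add: cong_def)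

lemma mod_add_eq_self_iff:
  fixes j x m :: nat
  assumes "j < m"
  shows "(j + x) mod m = j \<longleftrightarrow> m dvd x"
  using assms cong_add_lcancel_nat[of j x 0 m] by (simp add: cong_def dvd_eq_mod_eq_0)

lemma dvd_add_diff_iff_eq:
  fixes i j m :: nat
  assumes "i < m" "j < m"
  shows "m dvd i + (m - j) \<longleftrightarrow> i = j"
proof
  assume "m dvd i + (m - j)"
  then have "(j + (i + (m - j))) mod m = j" using assms(2) by (simp only: mod_add_eq_self_iff)
  moreover have "j + (i + (m - j)) = i + m" using assms(2) by simp
  ultimately have "i mod m = j" by simp
  then show "i = j" using assms(1) by simp
qed (use assms in simp)

lemma cong_affine_solvable:
  fixes a p z t :: nat
  assumes "coprime a p" "p > 0"
  shows "\<exists>y<p. [z + y * a = t] (mod p)"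
proof -
  obtain x where x: "[a * x = 1] (mod p)" using cong_solve_coprime_nat[OF assms(1)] by auto
  define y where "y = x * (t + (p - 1) * z)"
  have "[y * a = 1 * (t + (p - 1) * z)] (mod p)"
    using cong_mult[OF x cong_refl[of "t + (p - 1) * z"]] by (simp add: y_def ac_simps)
  then have "[z + y * a = z + (t + (p - 1) * z)] (mod p)" by (simp add: cong_add_lcancel_nat)
  also have "z + (t + (p - 1) * z) = t + p * z"
    using assms(2) by (cases p) (simp_all add: algebra_simps)
  also have "[t + p * z = t] (mod p)" by (simp add: cong_def)
  finally have "[z + y * a = t] (mod p)" .
  moreover have "[z + y mod p * a = z + y * a] (mod p)"
    by (intro cong_add cong_refl cong_mult) (simp add: cong_def)
  ultimately have "[z + y mod p * a = t] (mod p)" by (rule cong_trans[rotated])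
  then show ?thesis using assms(2) by (intro exI[of _ "y mod p"]) simp
qed

section \<open>The Heisenberg group modulo a prime\<close>

text \<open>The group elements are the numbers below p^3: E x y z (with x, y, z < p) codes the
  unitriangular matrix [[1, y, z], [0, 1, x], [0, 0, 1]] over Z/p, so that
  (x, y, z) (x', y', z') = (x + x', y + y', z + z' + y x').\<close>

locale heisenberg =
  fixes p :: nat
  assumes prime: "prime p"
begin

lemma p_gt_1: "p > 1" using prime prime_gt_1_nat by blast
lemma p_pos: "p > 0" using p_gt_1 by simp

definition E :: "nat \<Rightarrow> nat \<Rightarrow> nat \<Rightarrow> nat" where "E x y z = x + p * (y + p * z)"
definition X :: "nat \<Rightarrow> nat" where "X g = g mod p"
definition Y :: "nat \<Rightarrow> nat" where "Y g = g div p mod p"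
definition Z :: "nat \<Rightarrow> nat" where "Z g = g div p div p"

definition N :: nat where "N = p * p * p"

lemma N_pos: "N > 0" unfolding N_def using p_pos by simp

lemma X_lt [simp]: "X g < p" unfolding X_def using p_pos by simp
lemma Y_lt [simp]: "Y g < p" unfolding Y_def using p_pos by simp
lemma Z_lt: "g < N \<Longrightarrow> Z g < p"
  unfolding Z_def N_def by (simp add: div_less_iff_less_mult mult.assoc p_pos mult.commute)

lemma E_lt: "x < p \<Longrightarrow> y < p \<Longrightarrow> z < p \<Longrightarrow> E x y z < N"
proof -
  assume xyz: "x < p" "y < p" "z < p"
  have "y + p * z + 1 \<le> p * p"
    using xyz mult_le_mono2[of z "p - 1" p] by (cases p) (auto simp: algebra_simps)
  then have "p * (y + p * z) + p \<le> p * p * p"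
    using mult_le_mono2[of "y + p * z + 1" "p * p" p] by (simp add: algebra_simps)
  then show ?thesis unfolding E_def N_def using xyz by simp
qed

lemma X_E [simp]: "x < p \<Longrightarrow> X (E x y z) = x" unfolding X_def E_def by simp
lemma Y_E [simp]: "x < p \<Longrightarrow> y < p \<Longrightarrow> Y (E x y z) = y" unfolding Y_def E_def using p_pos by simp
lemma Z_E [simp]: "x < p \<Longrightarrow> y < p \<Longrightarrow> Z (E x y z) = z" unfolding Z_def E_def using p_pos by simp

lemma E_XYZ: "E (X g) (Y g) (Z g) = g"
  unfolding E_def X_def Y_def Z_def by (metis add.commute div_mult_mod_eq mult.commute)

lemma XYZ_eqI: "X g = X h \<Longrightarrow> Y g = Y h \<Longrightarrow> Z g = Z h \<Longrightarrow> g = h"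
  by (metis E_XYZ)

lemma XYZ_0 [simp]: "X 0 = 0" "Y 0 = 0" "Z 0 = 0" unfolding X_def Y_def Z_def by auto

lemma eq_0_iff_XYZ: "g = 0 \<longleftrightarrow> X g = 0 \<and> Y g = 0 \<and> Z g = 0"
  using XYZ_eqI[of g 0] by auto

definition mul :: "nat \<Rightarrow> nat \<Rightarrow> nat" where
  "mul g h = E ((X g + X h) mod p) ((Y g + Y h) mod p) ((Z g + Z h + Y g * X h) mod p)"

lemma X_mul [simp]: "X (mul g h) = (X g + X h) mod p" unfolding mul_def using p_pos by simp
lemma Y_mul [simp]: "Y (mul g h) = (Y g + Y h) mod p" unfolding mul_def using p_pos by simp
lemma Z_mul [simp]: "Z (mul g h) = (Z g + Z h + Y g * X h) mod p" unfolding mul_def using p_pos by simp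
lemma mul_lt: "mul g h < N" unfolding mul_def using p_pos by (intro E_lt) auto

lemma mul_assoc: "mul (mul f g) h = mul f (mul g h)"
proof (rule XYZ_eqI)
  have "Z (mul (mul f g) h) = (Z f + Z g + Y f * X g + Z h + (Y f + Y g) * X h) mod p"
    by simp (intro mod_add_cong mod_mult_cong; simp)
  also have "\<dots> = (Z f + (Z g + Z h + Y g * X h) + Y f * (X g + X h)) mod p"
    by (simp add: algebra_simps)
  also have "\<dots> = Z (mul f (mul g h))"
    by simp (intro mod_add_cong mod_mult_cong; simp)
  finally show "Z (mul (mul f g) h) = Z (mul f (mul g h))" .
qed (simp_all add: mod_simps add.assoc)

lemma mul_0_left: "g < N \<Longrightarrow> mul 0 g = g"
  by (rule XYZ_eqI) (simp_all add: Z_lt)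

lemma mul_0_right: "g < N \<Longrightarrow> mul g 0 = g"
  by (rule XYZ_eqI) (simp_all add: Z_lt)

lemma mul_left_inverse: "\<exists>h<N. mul h g = 0"
proof -
  define a where "a = (p - X g) mod p"
  define b where "b = (p - Y g) mod p"
  define c where "c = (p - (Z g + b * X g) mod p) mod p"
  have abc: "a < p" "b < p" "c < p" unfolding a_def b_def c_def using p_pos by auto
  have "mul (E a b c) g = 0"
  proof (rule XYZ_eqI)
    show "X (mul (E a b c) g) = X 0"
      using abc by (simp add: a_def mod_add_left_eq less_imp_le)
    show "Y (mul (E a b c) g) = Y 0"
      using abc by (simp add: b_def mod_add_left_eq less_imp_le)
    have "Z (mul (E a b c) g) = (c + (Z g + b * X g) mod p) mod p"
      using abc by (simp add: mod_simps add.assoc)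
    also have "\<dots> = 0" using p_pos by (simp add: c_def mod_add_left_eq)
    finally show "Z (mul (E a b c) g) = Z 0" by simp
  qed
  then show ?thesis using E_lt[OF abc] by blast
qed

definition G :: "nat monoid" where
  "G = \<lparr>carrier = {..<N}, mult = mul, one = 0\<rparr>"

lemma G_simps [simp]: "carrier G = {..<N}" "mult G = mul" "one G = 0"
  unfolding G_def by auto

lemma group_G: "group G"
proof (rule groupI)
  show "\<exists>h\<in>carrier G. h \<otimes>\<^bsub>G\<^esub> g = \<one>\<^bsub>G\<^esub>" for g
    using mul_left_inverse[of g] by auto
qed (use N_pos mul_lt mul_assoc mul_0_left in auto)

lemma E_in_carrier: "x < p \<Longrightarrow> y < p \<Longrightarrow> z < p \<Longrightarrow> E x y z \<in> carrier G"
  using E_lt by simp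

abbreviation \<omega> :: complex where "\<omega> \<equiv> unity_root p"

lemmas \<omega>_pow_eq_iff = unity_root_pow_eq_iff[OF p_pos]

lemma sum_\<omega>_pow_less: "t < p \<Longrightarrow> (\<Sum>y<p. \<omega> ^ (t * y)) = (if t = 0 then of_nat p else 0)"
  using sum_unity_root_pow[OF p_pos, of t] by (simp add: nat_dvd_not_less)

definition lin_rep :: "nat \<Rightarrow> nat \<Rightarrow> nat \<Rightarrow> complex mat" where
  "lin_rep a b g = mat 1 1 (\<lambda>_. \<omega> ^ (a * X g + b * Y g))"

definition lin_char :: "nat \<Rightarrow> nat \<Rightarrow> nat \<Rightarrow> complex" where
  "lin_char a b g = (if g < N then \<omega> ^ (a * X g + b * Y g) else 0)"

lemma lin_rep_mul: "lin_rep a b (mul g h) = lin_rep a b g * lin_rep a b h"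
proof (rule eq_matI)
  have "(a * X g + b * Y g + (a * X h + b * Y h)) mod p = (a * (X g + X h) + b * (Y g + Y h)) mod p"
    by (simp add: algebra_simps)
  also have "\<dots> = (a * ((X g + X h) mod p) + b * ((Y g + Y h) mod p)) mod p"
    by (intro mod_add_cong mod_mult_cong) simp_all
  finally have "\<omega> ^ (a * X g + b * Y g) * \<omega> ^ (a * X h + b * Y h)
      = \<omega> ^ (a * ((X g + X h) mod p) + b * ((Y g + Y h) mod p))"
    by (simp add: power_add[symmetric] \<omega>_pow_eq_iff)
  then show "lin_rep a b (mul g h) $$ (i, j) = (lin_rep a b g * lin_rep a b h) $$ (i, j)"
    if "i < dim_row (lin_rep a b g * lin_rep a b h)" "j < dim_col (lin_rep a b g * lin_rep a b h)"
    for i j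
    using that by (simp add: lin_rep_def scalar_prod_def)
qed (simp_all add: lin_rep_def)

lemma lin_rep_irreducible: "irreducible_rep G 1 (lin_rep a b)"
proof (rule irreducible_rep_dim1)
  show "is_rep G 1 (lin_rep a b)"
    unfolding is_rep_def by (auto simp: lin_rep_mul) (auto simp: lin_rep_def intro!: eq_matI)
qed

lemma character_lin_rep: "character G (lin_rep a b) = lin_char a b"
  by (rule ext) (simp add: character_def mat_trace_def lin_rep_def lin_char_def)

text \<open>For p not dividing c, the Schroedinger representation with central character
  z \<mapsto> \<omega>^(c z): on the standard basis of C^p, the x-coordinate acts by translation,
  y and z by phases.\<close>

definition schroedinger_rep :: "nat \<Rightarrow> nat \<Rightarrow> complex mat" where
  "schroedinger_rep c g =
     mat p p (\<lambda>(i, j). if i = (j + X g) mod p then \<omega> ^ (c * (Z g + Y g * j)) else 0)"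

definition schroedinger_char :: "nat \<Rightarrow> nat \<Rightarrow> complex" where
  "schroedinger_char c g = (if g < N \<and> X g = 0 \<and> Y g = 0 then of_nat p * \<omega> ^ (c * Z g) else 0)"

lemma schroedinger_rep_carrier [simp]: "schroedinger_rep c g \<in> carrier_mat p p"
  by (simp add: schroedinger_rep_def)

lemma schroedinger_rep_mul:
  "schroedinger_rep c (mul g h) = schroedinger_rep c g * schroedinger_rep c h"
proof (rule eq_matI)
  fix i j assume "i < dim_row (schroedinger_rep c g * schroedinger_rep c h)"
    "j < dim_col (schroedinger_rep c g * schroedinger_rep c h)"
  then have ij: "i < p" "j < p" by (auto simp: schroedinger_rep_def)
  define t where "t = (j + X h) mod p"
  have t: "t < p" unfolding t_def using p_pos by simp
  have "(schroedinger_rep c g * schroedinger_rep c h) $$ (i, j)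
      = (\<Sum>k<p. schroedinger_rep c g $$ (i, k) * (if k = t then \<omega> ^ (c * (Z h + Y h * j)) else 0))"
    using ij by (simp add: index_mult_mat_sum[of _ p p _ p] del: index_mult_mat(1))
      (simp add: schroedinger_rep_def t_def)
  also have "\<dots> = (if i = (t + X g) mod p
      then \<omega> ^ (c * (Z g + Y g * t)) * \<omega> ^ (c * (Z h + Y h * j)) else 0)"
    using ij t by (simp add: sum_delta_mult schroedinger_rep_def)
  also have "\<dots> = schroedinger_rep c (mul g h) $$ (i, j)"
  proof -
    have "(t + X g) mod p = (j + (X g + X h) mod p) mod p"
      unfolding t_def by (simp add: mod_simps ac_simps)
    moreover have "(c * (Z g + Y g * t) + c * (Z h + Y h * j)) mod p
        = (c * ((Z g + Z h + Y g * X h) mod p + (Y g + Y h) mod p * j)) mod p"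
    proof -
      have "(c * (Z g + Y g * t) + c * (Z h + Y h * j)) mod p
          = (c * (Z g + Y g * (j + X h)) + c * (Z h + Y h * j)) mod p"
        unfolding t_def by (intro mod_add_cong mod_mult_cong) simp_all
      also have "\<dots> = (c * ((Z g + Z h + Y g * X h) + (Y g + Y h) * j)) mod p"
        by (simp add: algebra_simps)
      also have "\<dots> = (c * ((Z g + Z h + Y g * X h) mod p + (Y g + Y h) mod p * j)) mod p"
        by (intro mod_add_cong mod_mult_cong) simp_all
      finally show ?thesis .
    qed
    ultimately show ?thesis
      using ij by (simp add: schroedinger_rep_def power_add[symmetric] \<omega>_pow_eq_iff)
  qed
  finally show "schroedinger_rep c (mul g h) $$ (i, j)
      = (schroedinger_rep c g * schroedinger_rep c h) $$ (i, j)" by simp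
qed (simp_all add: schroedinger_rep_def)

lemma schroedinger_rep_is_rep: "is_rep G p (schroedinger_rep c)"
  unfolding is_rep_def
  by (auto simp: schroedinger_rep_mul) (auto simp: schroedinger_rep_def intro!: eq_matI)

lemma schroedinger_rep_diag:
  assumes "y < p" "v \<in> carrier_vec p"
  shows "schroedinger_rep c (E 0 y 0) *\<^sub>v v = vec p (\<lambda>i. \<omega> ^ (c * y * i) * v $ i)"
proof (rule eq_vecI)
  fix i assume "i < dim_vec (vec p (\<lambda>i. \<omega> ^ (c * y * i) * v $ i))"
  then have i: "i < p" by simp
  have "(schroedinger_rep c (E 0 y 0) *\<^sub>v v) $ i
      = (\<Sum>k<p. v $ k * (if k = i then \<omega> ^ (c * y * i) else 0))"
    using assms i p_pos
    by (simp add: index_mult_mat_vec_sum[of _ p p] del: index_mult_mat_vec)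
      (auto simp: schroedinger_rep_def mult_ac intro!: sum.cong)
  then show "(schroedinger_rep c (E 0 y 0) *\<^sub>v v) $ i = vec p (\<lambda>i. \<omega> ^ (c * y * i) * v $ i) $ i"
    using i by (simp add: sum_delta_mult mult.commute)
qed (simp add: schroedinger_rep_def)

lemma schroedinger_rep_shift:
  assumes "x < p" "j < p"
  shows "schroedinger_rep c (E x 0 0) *\<^sub>v unit_vec p j = unit_vec p ((j + x) mod p)"
proof (rule eq_vecI)
  fix i assume "i < dim_vec (unit_vec p ((j + x) mod p) :: complex vec)"
  then have i: "i < p" by simp
  have "(schroedinger_rep c (E x 0 0) *\<^sub>v unit_vec p j) $ i = schroedinger_rep c (E x 0 0) $$ (i, j)"
    using i assms
    by (simp add: index_mult_mat_vec_sum[of _ p p] sum_delta_mult del: index_mult_mat_vec)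
  then show "(schroedinger_rep c (E x 0 0) *\<^sub>v unit_vec p j) $ i = unit_vec p ((j + x) mod p) $ i"
    using i assms p_pos by (simp add: schroedinger_rep_def)
qed (simp add: schroedinger_rep_def)

text \<open>Averaging the diagonal elements E 0 y 0, twisted by a phase, projects a vector onto
  its j-th coordinate line.\<close>

lemma schroedinger_invariant_unit_vec:
  assumes c: "\<not> p dvd c" and W: "invariant_subspace G p (schroedinger_rep c) W"
    and v: "v \<in> W" and j: "j < p" "v $ j \<noteq> 0"
  shows "unit_vec p j \<in> W"
proof -
  have vc: "v \<in> carrier_vec p" using v W unfolding invariant_subspace_def by blast
  define f where "f y = \<omega> ^ (c * y * (p - j)) \<cdot>\<^sub>v (schroedinger_rep c (E 0 y 0) *\<^sub>v v)" for y
  have "f y \<in> W" if "y < p" for y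
    using W v that p_pos E_in_carrier[of 0 y 0] unfolding f_def invariant_subspace_def by simp
  then have "vec p (\<lambda>i. \<Sum>y<p. f y $ i) \<in> W" by (rule invariant_subspace_sum_closed[OF W])
  moreover have "vec p (\<lambda>i. \<Sum>y<p. f y $ i) = (of_nat p * v $ j) \<cdot>\<^sub>v unit_vec p j"
  proof (rule eq_vecI)
    fix i assume "i < dim_vec ((of_nat p * v $ j) \<cdot>\<^sub>v unit_vec p j)"
    then have i: "i < p" by simp
    have "p dvd c * (i + (p - j)) \<longleftrightarrow> i = j"
      using c prime dvd_add_diff_iff_eq[OF i j(1)] by (simp add: prime_dvd_mult_iff)
    moreover have "f y $ i = \<omega> ^ (c * (i + (p - j)) * y) * v $ i" if "y < p" for y
      using that i vc
      by (simp add: f_def schroedinger_rep_diag power_add[symmetric] algebra_simps)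
    ultimately have "(\<Sum>y<p. f y $ i) = (if i = j then of_nat p * v $ j else 0)"
      by (simp add: sum_distrib_right[symmetric] sum_unity_root_pow[OF p_pos])
    then show "vec p (\<lambda>i. \<Sum>y<p. f y $ i) $ i = ((of_nat p * v $ j) \<cdot>\<^sub>v unit_vec p j) $ i"
      using i j by simp
  qed simp
  ultimately have "(1 / (of_nat p * v $ j)) \<cdot>\<^sub>v ((of_nat p * v $ j) \<cdot>\<^sub>v unit_vec p j) \<in> W"
    using W unfolding invariant_subspace_def by simp
  then show ?thesis using j p_pos by (simp add: smult_smult_assoc)
qed

lemma schroedinger_rep_irreducible:
  assumes c: "\<not> p dvd c"
  shows "irreducible_rep G p (schroedinger_rep c)"
  unfolding irreducible_rep_def
proof (intro conjI allI impI schroedinger_rep_is_rep p_pos)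
  fix W assume W: "invariant_subspace G p (schroedinger_rep c) W"
  show "W = {0\<^sub>v p} \<or> W = carrier_vec p"
  proof (cases "W \<subseteq> {0\<^sub>v p}")
    case True
    then show ?thesis using W unfolding invariant_subspace_def by blast
  next
    case False
    then obtain v where v: "v \<in> W" "v \<noteq> 0\<^sub>v p" by blast
    then have "v \<in> carrier_vec p" using W unfolding invariant_subspace_def by blast
    then obtain j where j: "j < p" "v $ j \<noteq> 0" using nonzero_vec_nonzero_index v(2) by blast
    have uj: "unit_vec p j \<in> W" by (rule schroedinger_invariant_unit_vec[OF c W v(1) j])
    have "unit_vec p i \<in> W" if i: "i < p" for i
    proof -
      define x where "x = (i + (p - j)) mod p"
      have x: "x < p" unfolding x_def using p_pos by simp
      have "(j + x) mod p = i" unfolding x_def using i j by (simp add: mod_add_right_eq)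
      then have "schroedinger_rep c (E x 0 0) *\<^sub>v unit_vec p j = unit_vec p i"
        using schroedinger_rep_shift[OF x j(1)] by simp
      then show ?thesis
        using W uj x p_pos E_in_carrier[of x 0 0] unfolding invariant_subspace_def by metis
    qed
    then show ?thesis using invariant_subspace_full_if_unit_vecs[OF W] by blast
  qed
qed

lemma character_schroedinger_rep:
  assumes c: "\<not> p dvd c"
  shows "character G (schroedinger_rep c) = schroedinger_char c"
proof
  fix g
  show "character G (schroedinger_rep c) g = schroedinger_char c g"
  proof (cases "g < N")
    case True
    have "character G (schroedinger_rep c) g
        = (\<Sum>j<p. if j = (j + X g) mod p then \<omega> ^ (c * (Z g + Y g * j)) else 0)"
      using True by (simp add: character_def mat_trace_def schroedinger_rep_def)
    also have "\<dots> = (if X g = 0 then \<Sum>j<p. \<omega> ^ (c * Z g) * \<omega> ^ ((c * Y g) * j) else 0)"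
    proof -
      have "j = (j + X g) mod p \<longleftrightarrow> X g = 0" if "j < p" for j
        using mod_add_eq_self_iff[OF that, of "X g"] X_lt[of g] nat_dvd_not_less[of "X g" p] by auto
      then show ?thesis
        by (auto simp: power_add[symmetric] algebra_simps intro!: sum.cong)
    qed
    also have "\<dots> = (if X g = 0 \<and> Y g = 0 then of_nat p * \<omega> ^ (c * Z g) else 0)"
    proof -
      have "p dvd c * Y g \<longleftrightarrow> Y g = 0"
        using c prime Y_lt[of g] nat_dvd_not_less[of "Y g" p] by (auto simp: prime_dvd_mult_iff)
      then show ?thesis
        by (simp add: sum_distrib_left[symmetric] sum_unity_root_pow[OF p_pos])
    qed
    finally show ?thesis using True by (simp add: schroedinger_char_def)
  qed (simp add: character_def schroedinger_char_def)
qed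

subsection \<open>Conjugacy classes\<close>

definition fibre :: "nat \<Rightarrow> nat \<Rightarrow> nat set" where
  "fibre x y = {g. g < N \<and> X g = x \<and> Y g = y}"

definition nonzero_pairs :: "(nat \<times> nat) set" where
  "nonzero_pairs = {..<p} \<times> {..<p} - {(0, 0)}"

lemma coprime_less_p: "0 < a \<Longrightarrow> a < p \<Longrightarrow> coprime a p"
  using prime_imp_coprime[OF prime, of a] nat_dvd_not_less[of a p] by (simp add: coprime_commute)

lemma conjugate_coords:
  assumes "mul k h = mul h g"
  shows "X k = X g" "Y k = Y g" "(Z k + Z h + Y k * X h) mod p = (Z h + Z g + Y h * X g) mod p"
proof -
  have "(X k + X h) mod p = (X g + X h) mod p" using arg_cong[OF assms, of X] by (simp add: add.commute)
  then show "X k = X g" by (rule mod_add_right_cancel_less[OF X_lt X_lt])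
  have "(Y k + Y h) mod p = (Y g + Y h) mod p" using arg_cong[OF assms, of Y] by (simp add: add.commute)
  then show "Y k = Y g" by (rule mod_add_right_cancel_less[OF Y_lt Y_lt])
  show "(Z k + Z h + Y k * X h) mod p = (Z h + Z g + Y h * X g) mod p"
    using arg_cong[OF assms, of Z] by simp
qed

lemma conj_class_central:
  assumes g: "g < N" and xy: "X g = 0" "Y g = 0"
  shows "conj_class G g = {g}"
proof -
  have "k = g" if k: "k < N" and conj: "mul k h = mul h g" for k h
  proof (rule XYZ_eqI)
    show "X k = X g" "Y k = Y g" using conjugate_coords[OF conj] by simp_all
    have "(Z k + Z h) mod p = (Z g + Z h) mod p"
      using conjugate_coords[OF conj] xy by (simp add: add.commute)
    then show "Z k = Z g" by (rule mod_add_right_cancel_less[OF Z_lt[OF k] Z_lt[OF g]])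
  qed
  moreover have "mul g 0 = mul 0 g" using g by (simp add: mul_0_left mul_0_right)
  ultimately show ?thesis
    unfolding conj_class_conv[OF group_G, of g, simplified, OF g] using g N_pos by auto
qed

lemma conjugator_exists:
  assumes g: "\<not> (X g = 0 \<and> Y g = 0)" and k: "k \<in> fibre (X g) (Y g)"
  shows "\<exists>h<N. mul k h = mul h g"
proof -
  from k have kN: "k < N" and kxy: "X k = X g" "Y k = Y g" unfolding fibre_def by auto
  show ?thesis
  proof (cases "X g = 0")
    case False
    then have "coprime (X g) p" by (intro coprime_less_p) simp_all
    then obtain y where y: "y < p" "[Z g + y * X g = Z k] (mod p)"
      using cong_affine_solvable[OF _ p_pos] by blast
    have "mul k (E 0 y 0) = mul (E 0 y 0) g"
    proof (rule XYZ_eqI)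
      show "X (mul k (E 0 y 0)) = X (mul (E 0 y 0) g)" using y(1) p_pos kxy by simp
      show "Y (mul k (E 0 y 0)) = Y (mul (E 0 y 0) g)" using y(1) p_pos kxy by (simp add: ac_simps)
      show "Z (mul k (E 0 y 0)) = Z (mul (E 0 y 0) g)"
        using y p_pos Z_lt[OF kN] unfolding cong_def by simp
    qed
    then show ?thesis using y(1) p_pos E_lt[of 0 y 0] by blast
  next
    case True
    then have "Y g \<noteq> 0" using g by simp
    then have "coprime (Y g) p" by (intro coprime_less_p) simp_all
    then obtain x where x: "x < p" "[Z k + x * Y g = Z g] (mod p)"
      using cong_affine_solvable[OF _ p_pos] by blast
    have "mul k (E x 0 0) = mul (E x 0 0) g"
    proof (rule XYZ_eqI)
      show "X (mul k (E x 0 0)) = X (mul (E x 0 0) g)" using x(1) p_pos kxy by (simp add: ac_simps)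
      show "Y (mul k (E x 0 0)) = Y (mul (E x 0 0) g)" using x(1) p_pos kxy by simp
      show "Z (mul k (E x 0 0)) = Z (mul (E x 0 0) g)"
        using x p_pos kxy True Z_lt[OF kN] unfolding cong_def by (simp add: mult.commute)
    qed
    then show ?thesis using x(1) p_pos E_lt[of x 0 0] by blast
  qed
qed

lemma conj_class_noncentral:
  assumes g: "g < N" and xy: "\<not> (X g = 0 \<and> Y g = 0)"
  shows "conj_class G g = fibre (X g) (Y g)"
proof -
  have "k \<in> fibre (X g) (Y g)" if "k < N" "mul k h = mul h g" for k h
    using that conjugate_coords(1,2)[of k h g] unfolding fibre_def by simp
  moreover have "fibre (X g) (Y g) \<subseteq> {..<N}" unfolding fibre_def by blast
  ultimately show ?thesis
    using conjugator_exists[OF xy]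
    unfolding conj_class_conv[OF group_G, of g, simplified, OF g] by blast
qed

lemma conj_classes_eq:
  "conj_classes G = (\<lambda>z. {E 0 0 z}) ` {..<p} \<union> (\<lambda>(x, y). fibre x y) ` nonzero_pairs"
proof (intro equalityI subsetI)
  fix C assume "C \<in> conj_classes G"
  then obtain g where g: "g < N" and C: "C = conj_class G g" unfolding conj_classes_def by auto
  show "C \<in> (\<lambda>z. {E 0 0 z}) ` {..<p} \<union> (\<lambda>(x, y). fibre x y) ` nonzero_pairs"
  proof (cases "X g = 0 \<and> Y g = 0")
    case True
    then have "C = {E 0 0 (Z g)}" using conj_class_central[OF g] C E_XYZ[of g] by simp
    then show ?thesis using Z_lt[OF g] by blast
  next
    case False
    then have "C = fibre (X g) (Y g)" using conj_class_noncentral[OF g] C by simp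
    moreover have "(X g, Y g) \<in> nonzero_pairs" unfolding nonzero_pairs_def using False by auto
    ultimately show ?thesis by force
  qed
next
  fix C assume "C \<in> (\<lambda>z. {E 0 0 z}) ` {..<p} \<union> (\<lambda>(x, y). fibre x y) ` nonzero_pairs"
  then consider (central) z where "z < p" "C = {E 0 0 z}"
    | (noncentral) x y where "(x, y) \<in> nonzero_pairs" "C = fibre x y"
    by auto
  then show "C \<in> conj_classes G"
  proof cases
    case central
    then have "E 0 0 z < N" "C = conj_class G (E 0 0 z)"
      using E_lt conj_class_central[of "E 0 0 z"] p_pos by simp_all
    then show ?thesis unfolding conj_classes_def by simp
  next
    case noncentral
    then have "E x y 0 < N" "C = conj_class G (E x y 0)"
      using E_lt conj_class_noncentral[of "E x y 0"] p_pos unfolding nonzero_pairs_def by auto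
    then show ?thesis unfolding conj_classes_def by simp
  qed
qed

lemma E_in_fibre: "x < p \<Longrightarrow> y < p \<Longrightarrow> E x y 0 \<in> fibre x y"
  unfolding fibre_def using E_lt p_pos by simp

lemma some_in_fibre: "(x, y) \<in> nonzero_pairs \<Longrightarrow> (SOME g. g \<in> fibre x y) \<in> fibre x y"
  using someI[of "\<lambda>g. g \<in> fibre x y", OF E_in_fibre] unfolding nonzero_pairs_def by blast

lemma inj_on_fibre: "inj_on (\<lambda>(x, y). fibre x y) nonzero_pairs"
proof (rule inj_onI, clarify)
  fix x y x' y' assume xy: "(x, y) \<in> nonzero_pairs" and "fibre x y = fibre x' y'"
  then have "E x y 0 \<in> fibre x' y'" using E_in_fibre unfolding nonzero_pairs_def by auto
  then show "x = x' \<and> y = y'" using xy unfolding fibre_def nonzero_pairs_def by simp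
qed

lemma singleton_neq_fibre: "(x, y) \<in> nonzero_pairs \<Longrightarrow> {E 0 0 z} \<noteq> fibre x y"
proof
  assume xy: "(x, y) \<in> nonzero_pairs" and "{E 0 0 z} = fibre x y"
  then have "E x y 0 = E 0 0 z" using E_in_fibre unfolding nonzero_pairs_def by blast
  then have "X (E x y 0) = X (E 0 0 z)" "Y (E x y 0) = Y (E 0 0 z)" by simp_all
  then show False using xy p_pos unfolding nonzero_pairs_def by auto
qed

lemma sum_conj_classes:
  "(\<Sum>C\<in>conj_classes G. f (SOME g. g \<in> C)) =
     (\<Sum>z<p. f (E 0 0 z)) + (\<Sum>(x, y)\<in>nonzero_pairs. (f (SOME g. g \<in> fibre x y) :: complex))"
proof -
  have inj_central: "inj_on (\<lambda>z. {E 0 0 z}) {..<p}"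
  proof (rule inj_onI)
    fix z z' assume "z \<in> {..<p}" "z' \<in> {..<p}" "{E 0 0 z} = {E 0 0 z'}"
    then have "Z (E 0 0 z) = Z (E 0 0 z')" by simp
    then show "z = z'" using p_pos by simp
  qed
  have "(\<lambda>z. {E 0 0 z}) ` {..<p} \<inter> (\<lambda>(x, y). fibre x y) ` nonzero_pairs = {}"
    using singleton_neq_fibre by fastforce
  moreover have "finite nonzero_pairs" unfolding nonzero_pairs_def by simp
  ultimately have "(\<Sum>C\<in>conj_classes G. f (SOME g. g \<in> C))
      = (\<Sum>C\<in>(\<lambda>z. {E 0 0 z}) ` {..<p}. f (SOME g. g \<in> C))
        + (\<Sum>C\<in>(\<lambda>(x, y). fibre x y) ` nonzero_pairs. f (SOME g. g \<in> C))"
    unfolding conj_classes_eq by (intro sum.union_disjoint) auto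
  also have "(\<Sum>C\<in>(\<lambda>z. {E 0 0 z}) ` {..<p}. f (SOME g. g \<in> C)) = (\<Sum>z<p. f (E 0 0 z))"
    by (subst sum.reindex[OF inj_central]) simp
  also have "(\<Sum>C\<in>(\<lambda>(x, y). fibre x y) ` nonzero_pairs. f (SOME g. g \<in> C))
      = (\<Sum>(x, y)\<in>nonzero_pairs. f (SOME g. g \<in> fibre x y))"
    by (subst sum.reindex[OF inj_on_fibre]) (simp add: case_prod_beta)
  finally show ?thesis .
qed

definition explicit_chars :: "(nat \<Rightarrow> complex) set" where
  "explicit_chars = (\<lambda>(a, b). lin_char a b) ` ({..<p} \<times> {..<p}) \<union> schroedinger_char ` {1..<p}"

lemma lin_char_one [simp]: "lin_char a b 0 = 1"
  using N_pos by (simp add: lin_char_def)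

lemma schroedinger_char_one [simp]: "schroedinger_char c 0 = of_nat p"
  using N_pos by (simp add: schroedinger_char_def)

lemma lin_char_inj: "inj_on (\<lambda>(a, b). lin_char a b) ({..<p} \<times> {..<p})"
proof (rule inj_onI, clarify)
  fix a b a' b' assume ab: "a < p" "b < p" "a' < p" "b' < p" and eq: "lin_char a b = lin_char a' b'"
  have "\<omega> ^ a = \<omega> ^ a'"
    using fun_cong[OF eq, of "E 1 0 0"] E_lt[of 1 0 0] p_gt_1 by (simp add: lin_char_def)
  moreover have "\<omega> ^ b = \<omega> ^ b'"
    using fun_cong[OF eq, of "E 0 1 0"] E_lt[of 0 1 0] p_gt_1 by (simp add: lin_char_def)
  ultimately show "a = a' \<and> b = b'" using ab by (simp add: \<omega>_pow_eq_iff)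
qed

lemma schroedinger_char_inj: "inj_on schroedinger_char {1..<p}"
proof (rule inj_onI)
  fix c c' assume cc': "c \<in> {1..<p}" "c' \<in> {1..<p}" and eq: "schroedinger_char c = schroedinger_char c'"
  have "of_nat p * \<omega> ^ c = of_nat p * \<omega> ^ c'"
    using fun_cong[OF eq, of "E 0 0 1"] E_lt[of 0 0 1] p_gt_1 by (simp add: schroedinger_char_def)
  then show "c = c'" using cc' p_pos by (simp add: \<omega>_pow_eq_iff)
qed

lemma sum_explicit_chars:
  "(\<Sum>\<psi>\<in>explicit_chars. F \<psi>)
     = (\<Sum>(a, b)\<in>{..<p} \<times> {..<p}. F (lin_char a b)) + (\<Sum>c\<in>{1..<p}. F (schroedinger_char c) :: complex)"
proof -
  have "lin_char a b 0 \<noteq> schroedinger_char c 0" for a b c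
    using p_gt_1 by simp
  then have "lin_char a b \<noteq> schroedinger_char c" for a b c
    by metis
  then have "(\<lambda>(a, b). lin_char a b) ` ({..<p} \<times> {..<p}) \<inter> schroedinger_char ` {1..<p} = {}"
    by auto
  then have "(\<Sum>\<psi>\<in>explicit_chars. F \<psi>) = (\<Sum>\<psi>\<in>(\<lambda>(a, b). lin_char a b) ` ({..<p} \<times> {..<p}). F \<psi>)
      + (\<Sum>\<psi>\<in>schroedinger_char ` {1..<p}. F \<psi>)"
    unfolding explicit_chars_def by (intro sum.union_disjoint) auto
  also have "(\<Sum>\<psi>\<in>(\<lambda>(a, b). lin_char a b) ` ({..<p} \<times> {..<p}). F \<psi>)
      = (\<Sum>(a, b)\<in>{..<p} \<times> {..<p}. F (lin_char a b))"
    by (subst sum.reindex[OF lin_char_inj]) (simp add: case_prod_beta)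
  also have "(\<Sum>\<psi>\<in>schroedinger_char ` {1..<p}. F \<psi>) = (\<Sum>c\<in>{1..<p}. F (schroedinger_char c))"
    by (subst sum.reindex[OF schroedinger_char_inj]) simp
  finally show ?thesis .
qed

lemma explicit_chars_subset: "explicit_chars \<subseteq> irr_chars G"
proof
  fix \<psi> assume "\<psi> \<in> explicit_chars"
  then consider (lin) a b where "\<psi> = lin_char a b"
    | (schroedinger) c where "c \<in> {1..<p}" "\<psi> = schroedinger_char c"
    unfolding explicit_chars_def by auto
  then show "\<psi> \<in> irr_chars G"
  proof cases
    case lin
    then have "\<psi> = character G (lin_rep a b)" by (simp add: character_lin_rep)
    then show ?thesis using lin_rep_irreducible unfolding irr_chars_def by blast
  next
    case schroedinger
    then have "\<not> p dvd c" using nat_dvd_not_less[of c p] by auto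
    then have "\<psi> = character G (schroedinger_rep c)"
      using schroedinger by (simp add: character_schroedinger_rep)
    then show ?thesis
      using schroedinger_rep_irreducible[OF \<open>\<not> p dvd c\<close>] unfolding irr_chars_def by blast
  qed
qed

lemma sum_\<omega>_pow_pairs:
  "(\<Sum>(a, b)\<in>{..<p} \<times> {..<p}. \<omega> ^ (a * x + b * y)) = (\<Sum>a<p. \<omega> ^ (x * a)) * (\<Sum>b<p. \<omega> ^ (y * b))"
  by (simp add: sum.cartesian_product[symmetric] sum_product power_add mult.commute)

lemma sum_from_1: "(\<Sum>c\<in>{1..<p}. f c) = (\<Sum>c<p. f c) - (f 0 :: complex)"
proof -
  have "(\<Sum>c<p. f c) = f 0 + (\<Sum>c\<in>{Suc 0..<p}. f c)"
    unfolding lessThan_atLeast0 by (rule sum.atLeast_Suc_lessThan[OF p_pos])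
  then show ?thesis by simp
qed

lemma sum_lin_char_0_mult:
  assumes h: "h < N"
  shows "(\<Sum>(a, b)\<in>{..<p} \<times> {..<p}. lin_char a b 0 * lin_char a b h)
      = (if X h = 0 then of_nat p else 0) * (if Y h = 0 then of_nat p else 0)"
proof -
  have "(\<Sum>(a, b)\<in>{..<p} \<times> {..<p}. lin_char a b 0 * lin_char a b h)
      = (\<Sum>(a, b)\<in>{..<p} \<times> {..<p}. \<omega> ^ (a * X h + b * Y h))"
    using h by (simp add: lin_char_def)
  also have "\<dots> = (if X h = 0 then of_nat p else 0) * (if Y h = 0 then of_nat p else 0)"
    unfolding sum_\<omega>_pow_pairs by (simp add: sum_\<omega>_pow_less)
  finally show ?thesis .
qed

lemma sum_schroedinger_char_0_mult:
  assumes h: "h < N"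
  shows "(\<Sum>c\<in>{1..<p}. schroedinger_char c 0 * schroedinger_char c h)
      = (if X h = 0 \<and> Y h = 0 then of_nat p * of_nat p * ((if Z h = 0 then of_nat p else 0) - 1) else 0)"
proof -
  have "schroedinger_char c 0 * schroedinger_char c h
      = (if X h = 0 \<and> Y h = 0 then of_nat p * of_nat p * \<omega> ^ (Z h * c) else 0)" for c
    using h by (simp add: schroedinger_char_def mult.commute)
  then have "(\<Sum>c\<in>{1..<p}. schroedinger_char c 0 * schroedinger_char c h)
      = (if X h = 0 \<and> Y h = 0 then of_nat p * of_nat p * (\<Sum>c\<in>{1..<p}. \<omega> ^ (Z h * c)) else 0)"
    by (simp add: sum_distrib_left)
  also have "(\<Sum>c\<in>{1..<p}. \<omega> ^ (Z h * c)) = (if Z h = 0 then of_nat p else 0) - 1"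
    unfolding sum_from_1 using Z_lt[OF h] by (simp add: sum_\<omega>_pow_less)
  finally show ?thesis .
qed

lemma explicit_chars_regular:
  assumes h: "h < N"
  shows "(\<Sum>\<psi>\<in>explicit_chars. \<psi> 0 * \<psi> h) = (if h = 0 then of_nat N else 0)"
proof -
  have "(\<Sum>\<psi>\<in>explicit_chars. \<psi> 0 * \<psi> h)
      = (if X h = 0 then of_nat p else 0) * (if Y h = 0 then of_nat p else 0)
        + (if X h = 0 \<and> Y h = 0 then of_nat p * of_nat p * ((if Z h = 0 then of_nat p else 0) - 1) else 0)"
    unfolding sum_explicit_chars sum_lin_char_0_mult[OF h] sum_schroedinger_char_0_mult[OF h] ..
  also have "\<dots> = (if h = 0 then of_nat N else 0)"
  proof -
    consider "X h = 0" "Y h = 0" "Z h = 0" | "X h = 0" "Y h = 0" "Z h \<noteq> 0" | "X h \<noteq> 0" | "Y h \<noteq> 0"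
      by blast
    then show ?thesis
      unfolding eq_0_iff_XYZ[of h] N_def by cases (simp_all add: right_diff_distrib)
  qed
  finally show ?thesis .
qed

lemma irr_chars_eq: "irr_chars G = explicit_chars"
proof
  show "explicit_chars \<subseteq> irr_chars G" by (rule explicit_chars_subset)
  show "irr_chars G \<subseteq> explicit_chars"
    using group_G explicit_chars_subset explicit_chars_regular
    by (intro irr_chars_subset_if_regular_character) (auto simp: explicit_chars_def)
qed

subsection \<open>Row sums of the character table\<close>

lemma lin_char_class_sum:
  assumes "a < p" "b < p"
  shows "(\<Sum>C\<in>conj_classes G. lin_char a b (SOME g. g \<in> C))
       = of_nat p - 1 + (if a = 0 then of_nat p else 0) * (if b = 0 then of_nat p else 0)"
proof -
  have central: "(\<Sum>z<p. lin_char a b (E 0 0 z)) = of_nat p"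
    using p_pos E_lt by (simp add: lin_char_def)
  have "(\<Sum>(x, y)\<in>nonzero_pairs. lin_char a b (SOME g. g \<in> fibre x y))
      = (\<Sum>(x, y)\<in>nonzero_pairs. \<omega> ^ (x * a + y * b))"
    using some_in_fibre by (intro sum.cong) (auto simp: fibre_def lin_char_def mult.commute)
  also have "\<dots> = (\<Sum>(x, y)\<in>{..<p} \<times> {..<p}. \<omega> ^ (x * a + y * b)) - 1"
    unfolding nonzero_pairs_def using p_pos by (subst sum_diff1) auto
  also have "\<dots> = (if a = 0 then of_nat p else 0) * (if b = 0 then of_nat p else 0) - 1"
    using assms by (simp add: sum_\<omega>_pow_pairs sum_\<omega>_pow_less)
  finally show ?thesis unfolding sum_conj_classes central by simp
qed

lemma schroedinger_char_class_sum:
  assumes "c \<in> {1..<p}"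
  shows "(\<Sum>C\<in>conj_classes G. schroedinger_char c (SOME g. g \<in> C)) = 0"
proof -
  have "(\<Sum>z<p. schroedinger_char c (E 0 0 z)) = of_nat p * (\<Sum>z<p. \<omega> ^ (c * z))"
    using p_pos E_lt by (simp add: schroedinger_char_def sum_distrib_left)
  also have "\<dots> = 0" using assms by (simp add: sum_\<omega>_pow_less)
  finally have central: "(\<Sum>z<p. schroedinger_char c (E 0 0 z)) = 0" .
  have "(\<Sum>(x, y)\<in>nonzero_pairs. schroedinger_char c (SOME g. g \<in> fibre x y)) = 0"
  proof (rule sum.neutral, clarify)
    fix x y assume xy: "(x, y) \<in> nonzero_pairs"
    then have "X (SOME g. g \<in> fibre x y) = x" "Y (SOME g. g \<in> fibre x y) = y"
      using some_in_fibre[OF xy] unfolding fibre_def by simp_all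
    then show "schroedinger_char c (SOME g. g \<in> fibre x y) = 0"
      using xy unfolding nonzero_pairs_def schroedinger_char_def by auto
  qed
  then show ?thesis unfolding sum_conj_classes central by simp
qed

lemma char_table_sum_eq: "char_table_sum G = of_nat (p * p * p)"
proof -
  have "char_table_sum G
      = (\<Sum>(a, b)\<in>{..<p} \<times> {..<p}. \<Sum>C\<in>conj_classes G. lin_char a b (SOME g. g \<in> C))
        + (\<Sum>c\<in>{1..<p}. \<Sum>C\<in>conj_classes G. schroedinger_char c (SOME g. g \<in> C))"
    unfolding char_table_sum_def irr_chars_eq by (rule sum_explicit_chars)
  also have "(\<Sum>c\<in>{1..<p}. \<Sum>C\<in>conj_classes G. schroedinger_char c (SOME g. g \<in> C)) = 0"
    by (rule sum.neutral) (simp add: schroedinger_char_class_sum)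
  also have "(\<Sum>(a, b)\<in>{..<p} \<times> {..<p}. \<Sum>C\<in>conj_classes G. lin_char a b (SOME g. g \<in> C))
      = (\<Sum>(a, b)\<in>{..<p} \<times> {..<p}.
          of_nat p - 1 + (if a = 0 then of_nat p else 0) * (if b = 0 then of_nat p else 0))"
    by (rule sum.cong) (auto simp: lin_char_class_sum)
  also have "\<dots> = of_nat p * of_nat p * (of_nat p - 1) + of_nat p * of_nat p"
    using p_pos by (simp add: sum.distrib sum.cartesian_product[symmetric] sum_product[symmetric] sum.delta)
  also have "\<dots> = of_nat (p * p * p)" by (simp add: algebra_simps)
  finally show ?thesis by simp
qed

lemma Gamma_e_eq: "Gamma_e G = of_nat (p * (2 * p - 1))"
proof -
  have "Gamma_e G = of_nat (p * p + (p - 1) * p)"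
    unfolding Gamma_e_def irr_chars_eq G_simps sum_explicit_chars by (simp add: case_prod_beta)
  also have "p * p + (p - 1) * p = p * (2 * p - 1)"
    using p_pos by (cases p) (simp_all add: algebra_simps)
  finally show ?thesis .
qed

end

lemma mult_degree_sum_less_cube:
  fixes m :: int and p :: nat
  assumes "m > 0" "real p > 2 * of_int m"
  shows "of_int m * real (p * (2 * p - 1)) < real (p * p * p)"
proof -
  have p: "p > 0" using assms by linarith
  then have "p * (2 * p - 1) < p * (2 * p)" by (intro mult_strict_left_mono) simp_all
  then have "p * (2 * p - 1) < 2 * (p * p)" by simp
  then have "real (p * (2 * p - 1)) < real (2 * (p * p))" by (simp only: of_nat_less_iff)
  then have "real (p * (2 * p - 1)) < 2 * (real p * real p)" by simp
  then have "of_int m * real (p * (2 * p - 1)) < of_int m * (2 * (real p * real p))"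
    using assms(1) by simp
  also have "\<dots> < real p * (real p * real p)"
    using assms(2) p by (simp add: mult.assoc[symmetric] mult_strict_right_mono)
  finally show ?thesis by (simp add: mult.commute)
qed

theorem proposition2p9:
  fixes m :: int
  assumes "m > 1"
  shows "\<exists>G :: nat monoid. group G \<and> finite (carrier G) \<and>
           char_table_sum G \<in> \<real> \<and> Gamma_e G \<in> \<real> \<and>
           Re (char_table_sum G) > of_int m * Re (Gamma_e G)"
proof -
  obtain p :: nat where p: "prime p" "p > nat (2 * m)" using bigger_prime by blast
  interpret heisenberg p by unfold_locales (fact p(1))
  have "of_int m * real (p * (2 * p - 1)) < real (p * p * p)"
    using assms p(2) by (intro mult_degree_sum_less_cube) linarith+
  then show ?thesis
    using group_G by (intro exI[of _ G]) (simp add: char_table_sum_eq Gamma_e_eq)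
qed

end
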